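(* Let $H$ be a finite dimensional Hopf algebra over a field $k$. The following are equivalent: (a) (ITG) $\epsilon(\textstyle\int^r)\neq0$; (b) (Cond1); (c) (Cond1) and (Cond2).
   Context: Here $d=0$ is the injective dimension of $H$, $k=H/\ker\epsilon$, and $\textstyle\int^r=\operatorname{Hom}_{H^{\mathrm{op}}}(k_H,H_H)$, identified with the classical right integral $\{t\in H: th=t\epsilon(h)\ \forall h\}$; it is a $1$-dimensional left $H$-module. (Cond1): the map $\operatorname{Hom}_H(\textstyle\int^r,{}_HH)\to\operatorname{Hom}_H(\textstyle\int^r,{}_Hk)$ induced by $\epsilon$ is an isomorphism. (Cond2): for every simple left $H$-module $T\not\cong\textstyle\int^r$, $\operatorname{Hom}_H(T,k)=0$. *)

theory Defs
  imports Main
begin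

text \<open>A finite dimensional Hopf algebra H over a field 'k is presented by a finite
basis indexed by the finite type 'i. Elements of H are coordinate vectors 'i \<Rightarrow> 'k,
elements of H \<otimes> H are 'i \<times> 'i \<Rightarrow> 'k.  Structure constants:
  e_a e_b = \<Sum>_l M a b l e_l,   1 = \<Sum>_l u l e_l,
  \<Delta>(e_l) = \<Sum>_{i,j} C l i j e_i \<otimes> e_j,   \<epsilon>(e_l) = ep l,   S(e_i) = \<Sum>_m S i m e_m.\<close>

definition basis_vec :: "'i \<Rightarrow> 'i \<Rightarrow> 'k::field" where
  "basis_vec a = (\<lambda>l. if l = a then 1 else 0)"

definition hmult :: "('i::finite \<Rightarrow> 'i \<Rightarrow> 'i \<Rightarrow> 'k::field) \<Rightarrow> ('i \<Rightarrow> 'k) \<Rightarrow> ('i \<Rightarrow> 'k) \<Rightarrow> ('i \<Rightarrow> 'k)" where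
  "hmult M x y = (\<lambda>l. \<Sum>i\<in>UNIV. \<Sum>j\<in>UNIV. x i * y j * M i j l)"

definition comult :: "('i::finite \<Rightarrow> 'i \<Rightarrow> 'i \<Rightarrow> 'k::field) \<Rightarrow> ('i \<Rightarrow> 'k) \<Rightarrow> ('i \<times> 'i \<Rightarrow> 'k)" where
  "comult C x = (\<lambda>(i, j). \<Sum>l\<in>UNIV. x l * C l i j)"

definition counit :: "('i::finite \<Rightarrow> 'k::field) \<Rightarrow> ('i \<Rightarrow> 'k) \<Rightarrow> 'k" where
  "counit ep x = (\<Sum>l\<in>UNIV. x l * ep l)"

definition antip :: "('i::finite \<Rightarrow> 'i \<Rightarrow> 'k::field) \<Rightarrow> ('i \<Rightarrow> 'k) \<Rightarrow> ('i \<Rightarrow> 'k)" where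
  "antip S x = (\<lambda>m. \<Sum>i\<in>UNIV. x i * S i m)"

text \<open>Multiplication of H \<otimes> H (componentwise algebra structure).\<close>
definition tmult :: "('i::finite \<Rightarrow> 'i \<Rightarrow> 'i \<Rightarrow> 'k::field) \<Rightarrow> ('i \<times> 'i \<Rightarrow> 'k) \<Rightarrow> ('i \<times> 'i \<Rightarrow> 'k) \<Rightarrow> ('i \<times> 'i \<Rightarrow> 'k)" where
  "tmult M X Y = (\<lambda>(p, q). \<Sum>i\<in>UNIV. \<Sum>j\<in>UNIV. \<Sum>i'\<in>UNIV. \<Sum>j'\<in>UNIV.
      X (i, j) * Y (i', j') * M i i' p * M j j' q)"

definition hopf_algebra ::
  "('i::finite \<Rightarrow> 'i \<Rightarrow> 'i \<Rightarrow> 'k::field) \<Rightarrow> ('i \<Rightarrow> 'k) \<Rightarrow> ('i \<Rightarrow> 'i \<Rightarrow> 'i \<Rightarrow> 'k)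
     \<Rightarrow> ('i \<Rightarrow> 'k) \<Rightarrow> ('i \<Rightarrow> 'i \<Rightarrow> 'k) \<Rightarrow> bool" where
  "hopf_algebra M u C ep S \<longleftrightarrow>
     \<comment> \<open>associative unital algebra\<close>
     (\<forall>x y z. hmult M (hmult M x y) z = hmult M x (hmult M y z)) \<and>
     (\<forall>x. hmult M u x = x \<and> hmult M x u = x) \<and>
     \<comment> \<open>coassociative counital coalgebra\<close>
     (\<forall>x. (\<lambda>(a, b, c). \<Sum>i\<in>UNIV. comult C x (i, c) * C i a b)
          = (\<lambda>(a, b, c). \<Sum>j\<in>UNIV. comult C x (a, j) * C j b c)) \<and>
     (\<forall>x. (\<lambda>j. \<Sum>i\<in>UNIV. ep i * comult C x (i, j)) = x \<and>
          (\<lambda>i. \<Sum>j\<in>UNIV. comult C x (i, j) * ep j) = x) \<and>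
     \<comment> \<open>bialgebra: \<Delta> and \<epsilon> are algebra maps\<close>
     (\<forall>x y. comult C (hmult M x y) = tmult M (comult C x) (comult C y)) \<and>
     comult C u = (\<lambda>(p, q). u p * u q) \<and>
     (\<forall>x y. counit ep (hmult M x y) = counit ep x * counit ep y) \<and>
     counit ep u = 1 \<and>
     \<comment> \<open>antipode\<close>
     (\<forall>x. (\<lambda>p. \<Sum>i\<in>UNIV. \<Sum>j\<in>UNIV. comult C x (i, j) *
              hmult M (antip S (basis_vec i)) (basis_vec j) p) = (\<lambda>p. counit ep x * u p)) \<and>
     (\<forall>x. (\<lambda>p. \<Sum>i\<in>UNIV. \<Sum>j\<in>UNIV. comult C x (i, j) *
              hmult M (basis_vec i) (antip S (basis_vec j)) p) = (\<lambda>p. counit ep x * u p))"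

definition rint :: "('i::finite \<Rightarrow> 'i \<Rightarrow> 'i \<Rightarrow> 'k::field) \<Rightarrow> ('i \<Rightarrow> 'k) \<Rightarrow> ('i \<Rightarrow> 'k) set" where
  "rint M ep = {t. \<forall>h. hmult M t h = (\<lambda>l. counit ep h * t l)}"

definition ITG :: "('i::finite \<Rightarrow> 'i \<Rightarrow> 'i \<Rightarrow> 'k::field) \<Rightarrow> ('i \<Rightarrow> 'k) \<Rightarrow> bool" where
  "ITG M ep \<longleftrightarrow> (\<exists>t\<in>rint M ep. counit ep t \<noteq> 0)"

text \<open>Hom_H(\<integral>^r, _H H): left H-linear maps \<integral>^r \<rightarrow> H (extended by 0 off \<integral>^r).\<close>
definition HomIH :: "('i::finite \<Rightarrow> 'i \<Rightarrow> 'i \<Rightarrow> 'k::field) \<Rightarrow> ('i \<Rightarrow> 'k) \<Rightarrow> (('i \<Rightarrow> 'k) \<Rightarrow> ('i \<Rightarrow> 'k)) set" where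
  "HomIH M ep = {f.
     (\<forall>x\<in>rint M ep. \<forall>y\<in>rint M ep. f (\<lambda>l. x l + y l) = (\<lambda>l. f x l + f y l)) \<and>
     (\<forall>c. \<forall>x\<in>rint M ep. f (\<lambda>l. c * x l) = (\<lambda>l. c * f x l)) \<and>
     (\<forall>h. \<forall>x\<in>rint M ep. f (hmult M h x) = hmult M h (f x)) \<and>
     (\<forall>x. x \<notin> rint M ep \<longrightarrow> f x = (\<lambda>_. 0))}"

definition HomIk :: "('i::finite \<Rightarrow> 'i \<Rightarrow> 'i \<Rightarrow> 'k::field) \<Rightarrow> ('i \<Rightarrow> 'k) \<Rightarrow> (('i \<Rightarrow> 'k) \<Rightarrow> 'k) set" where
  "HomIk M ep = {g.
     (\<forall>x\<in>rint M ep. \<forall>y\<in>rint M ep. g (\<lambda>l. x l + y l) = g x + g y) \<and>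
     (\<forall>c. \<forall>x\<in>rint M ep. g (\<lambda>l. c * x l) = c * g x) \<and>
     (\<forall>h. \<forall>x\<in>rint M ep. g (hmult M h x) = counit ep h * g x) \<and>
     (\<forall>x. x \<notin> rint M ep \<longrightarrow> g x = 0)}"

definition Cond1 :: "('i::finite \<Rightarrow> 'i \<Rightarrow> 'i \<Rightarrow> 'k::field) \<Rightarrow> ('i \<Rightarrow> 'k) \<Rightarrow> bool" where
  "Cond1 M ep \<longleftrightarrow> bij_betw (\<lambda>f x. counit ep (f x)) (HomIH M ep) (HomIk M ep)"

text \<open>Finite dimensional left H-modules: k^d (vectors nat \<Rightarrow> 'k vanishing from d on),
with H acting through matrices \<rho> i (action of the basis vector e_i).\<close>
definition mcarrier :: "nat \<Rightarrow> (nat \<Rightarrow> 'k::field) set" where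
  "mcarrier d = {v. \<forall>j\<ge>d. v j = 0}"

definition mact :: "('i::finite \<Rightarrow> nat \<Rightarrow> nat \<Rightarrow> 'k::field) \<Rightarrow> nat \<Rightarrow> ('i \<Rightarrow> 'k) \<Rightarrow> (nat \<Rightarrow> 'k) \<Rightarrow> (nat \<Rightarrow> 'k)" where
  "mact \<rho> d h v = (\<lambda>a. if a < d then \<Sum>b<d. (\<Sum>i\<in>UNIV. h i * \<rho> i a b) * v b else 0)"

definition is_hmodule :: "('i::finite \<Rightarrow> 'i \<Rightarrow> 'i \<Rightarrow> 'k::field) \<Rightarrow> ('i \<Rightarrow> 'k)
     \<Rightarrow> ('i \<Rightarrow> nat \<Rightarrow> nat \<Rightarrow> 'k) \<Rightarrow> nat \<Rightarrow> bool" where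
  "is_hmodule M u \<rho> d \<longleftrightarrow>
     (\<forall>h g. \<forall>v\<in>mcarrier d. mact \<rho> d (hmult M h g) v = mact \<rho> d h (mact \<rho> d g v)) \<and>
     (\<forall>v\<in>mcarrier d. mact \<rho> d u v = v)"

definition is_simple_hmodule :: "('i::finite \<Rightarrow> 'i \<Rightarrow> 'i \<Rightarrow> 'k::field) \<Rightarrow> ('i \<Rightarrow> 'k)
     \<Rightarrow> ('i \<Rightarrow> nat \<Rightarrow> nat \<Rightarrow> 'k) \<Rightarrow> nat \<Rightarrow> bool" where
  "is_simple_hmodule M u \<rho> d \<longleftrightarrow> is_hmodule M u \<rho> d \<and> d > 0 \<and>
     (\<forall>W. W \<subseteq> mcarrier d \<and> (\<lambda>_. 0) \<in> W \<and>
          (\<forall>v\<in>W. \<forall>w\<in>W. (\<lambda>a. v a + w a) \<in> W) \<and>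
          (\<forall>c. \<forall>v\<in>W. (\<lambda>a. c * v a) \<in> W) \<and>
          (\<forall>h. \<forall>v\<in>W. mact \<rho> d h v \<in> W)
        \<longrightarrow> W = {\<lambda>_. 0} \<or> W = mcarrier d)"

definition iso_to_rint :: "('i::finite \<Rightarrow> 'i \<Rightarrow> 'i \<Rightarrow> 'k::field) \<Rightarrow> ('i \<Rightarrow> 'k)
     \<Rightarrow> ('i \<Rightarrow> nat \<Rightarrow> nat \<Rightarrow> 'k) \<Rightarrow> nat \<Rightarrow> bool" where
  "iso_to_rint M ep \<rho> d \<longleftrightarrow> (\<exists>\<phi>. bij_betw \<phi> (mcarrier d) (rint M ep) \<and>
     (\<forall>v\<in>mcarrier d. \<forall>w\<in>mcarrier d. \<phi> (\<lambda>a. v a + w a) = (\<lambda>l. \<phi> v l + \<phi> w l)) \<and>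
     (\<forall>c. \<forall>v\<in>mcarrier d. \<phi> (\<lambda>a. c * v a) = (\<lambda>l. c * \<phi> v l)) \<and>
     (\<forall>h. \<forall>v\<in>mcarrier d. \<phi> (mact \<rho> d h v) = hmult M h (\<phi> v)))"

definition hom_to_k_zero :: "('i::finite \<Rightarrow> 'k::field) \<Rightarrow> ('i \<Rightarrow> nat \<Rightarrow> nat \<Rightarrow> 'k) \<Rightarrow> nat \<Rightarrow> bool" where
  "hom_to_k_zero ep \<rho> d \<longleftrightarrow> (\<forall>g :: (nat \<Rightarrow> 'k) \<Rightarrow> 'k.
     (\<forall>v\<in>mcarrier d. \<forall>w\<in>mcarrier d. g (\<lambda>a. v a + w a) = g v + g w) \<and>
     (\<forall>c. \<forall>v\<in>mcarrier d. g (\<lambda>a. c * v a) = c * g v) \<and>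
     (\<forall>h. \<forall>v\<in>mcarrier d. g (mact \<rho> d h v) = counit ep h * g v)
     \<longrightarrow> (\<forall>v\<in>mcarrier d. g v = 0))"

definition Cond2 :: "('i::finite \<Rightarrow> 'i \<Rightarrow> 'i \<Rightarrow> 'k::field) \<Rightarrow> ('i \<Rightarrow> 'k) \<Rightarrow> ('i \<Rightarrow> 'k) \<Rightarrow> bool" where
  "Cond2 M u ep \<longleftrightarrow> (\<forall>d (\<rho> :: 'i \<Rightarrow> nat \<Rightarrow> nat \<Rightarrow> 'k).
     is_simple_hmodule M u \<rho> d \<and> \<not> iso_to_rint M ep \<rho> d \<longrightarrow> hom_to_k_zero ep \<rho> d)"

end

(*
  Write T v = sum_i <e^i, v S^2(e_i(1))> e_i(2), where (e_i) is the basis and (e^i) the dual basis.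
  T maps H into the right integrals and fixes each of them, and v is recovered from the values
  T (v S(e_a)), so right integrals exist. For a right integral x /= 0 the elements
  A_k = sum <e^k, S(x_(1))> x_(2) satisfy T (A_k v) = v_k x; hence alpha |-> sum_k alpha_k A_k is
  an injective, so bijective, endomorphism of H, and applying T to y = sum_k alpha_k A_k shows
  that the right integrals form the line through x.

  If t is a right integral with eps(t) /= 0, then eps(t) f(x) = f(x t) = x f(t) = eps(f(t)) x for
  every H-linear f defined on the integrals, so f is determined by eps(f(t)); this gives (Cond1).
  Moreover t is then also a left integral, so for a simple module V with a nonzero H-linear
  g : V -> k, the map g is injective and v |-> g(v) t is an isomorphism onto the integrals;
  this gives (Cond2). Conversely, if eps vanishes on the nonzero space of integrals, composing with
  eps sends both the identity and the zero map of the integrals to 0, so (Cond1) fails.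
*)

theory Submission
  imports Defs "HOL-Library.Function_Algebras" "HOL-Analysis.Cartesian_Space"
begin

section \<open>Coordinate vectors and linear maps\<close>

definition smul :: "'k::field \<Rightarrow> ('a \<Rightarrow> 'k) \<Rightarrow> 'a \<Rightarrow> 'k" where
  "smul c x = (\<lambda>l. c * x l)"

lemma sum_fun_apply: "(\<Sum>j\<in>A. f j) l = (\<Sum>j\<in>A. f j l)"
  by (induct A rule: infinite_finite_induct) auto

lemma smul_apply: "smul c x l = c * x l"
  by (simp add: smul_def)

lemma smul_smul [simp]: "smul a (smul b x) = smul (a * b) x"
  by (simp add: smul_def fun_eq_iff mult.assoc)

lemma smul_one [simp]: "smul 1 x = x"
  by (simp add: smul_def)

lemma smul_zero_left [simp]: "smul 0 x = 0"
  by (simp add: smul_def fun_eq_iff)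

lemma smul_zero_right [simp]: "smul c 0 = 0"
  by (simp add: smul_def fun_eq_iff)

lemma smul_add_right: "smul c (x + y) = smul c x + smul c y"
  by (simp add: smul_def fun_eq_iff algebra_simps)

lemma smul_add_left: "smul (a + b) x = smul a x + smul b x"
  by (simp add: smul_def fun_eq_iff algebra_simps)

lemma smul_sum_right: "smul c (\<Sum>j\<in>A. f j) = (\<Sum>j\<in>A. smul c (f j))"
  by (simp add: smul_def fun_eq_iff sum_fun_apply sum_distrib_left)

lemma smul_sum_left: "smul (\<Sum>j\<in>A. f j) x = (\<Sum>j\<in>A. smul (f j) x)"
  by (simp add: smul_def fun_eq_iff sum_fun_apply sum_distrib_right)

lemma smul_cancel_right: "x \<noteq> 0 \<Longrightarrow> smul a x = smul b x \<Longrightarrow> (a::'k::field) = b"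
  by (auto simp: smul_def fun_eq_iff)

lemma sum_basis_vec_left: "(\<Sum>j\<in>UNIV. (basis_vec d j :: 'k::field) * f j) = f (d::'i::finite)"
  by (simp add: basis_vec_def if_distrib[of "\<lambda>c. c * _"] cong: if_cong)

lemma sum_basis_vec_right: "(\<Sum>j\<in>UNIV. (basis_vec j d :: 'k::field) * f j) = f (d::'i::finite)"
  by (simp add: basis_vec_def if_distrib[of "\<lambda>c. c * _"] eq_commute[of d] cong: if_cong)

lemma sum_basis_vec_smul: "(\<Sum>j\<in>UNIV. smul (basis_vec d j :: 'k::field) (f j)) = f (d::'i::finite)"
  by (simp add: fun_eq_iff sum_fun_apply smul_apply sum_basis_vec_left)

lemma basis_expansion: "x = (\<Sum>p\<in>UNIV. smul (x p) (basis_vec p :: 'i::finite \<Rightarrow> 'k::field))"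
  by (simp add: fun_eq_iff sum_fun_apply smul_apply mult.commute[of "x _"] sum_basis_vec_right)

lemma sum_swap2:
  "(\<Sum>a\<in>A. \<Sum>b\<in>B. \<Sum>c\<in>C. \<Sum>d\<in>D. G a b c d) = (\<Sum>c\<in>C. \<Sum>d\<in>D. \<Sum>a\<in>A. \<Sum>b\<in>B. G a b c d)"
proof -
  have "(\<Sum>a\<in>A. \<Sum>b\<in>B. \<Sum>c\<in>C. \<Sum>d\<in>D. G a b c d) = (\<Sum>a\<in>A. \<Sum>c\<in>C. \<Sum>b\<in>B. \<Sum>d\<in>D. G a b c d)"
    by (intro sum.cong refl sum.swap)
  also have "\<dots> = (\<Sum>c\<in>C. \<Sum>a\<in>A. \<Sum>d\<in>D. \<Sum>b\<in>B. G a b c d)"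
    by (subst sum.swap) (intro sum.cong refl sum.swap)
  also have "\<dots> = (\<Sum>c\<in>C. \<Sum>d\<in>D. \<Sum>a\<in>A. \<Sum>b\<in>B. G a b c d)"
    by (intro sum.cong refl sum.swap)
  finally show ?thesis .
qed

lemma sum_swap2_4:
  "(\<Sum>p\<in>P. \<Sum>q\<in>Q. \<Sum>a\<in>A. \<Sum>b\<in>B. \<Sum>c\<in>C. \<Sum>d\<in>D. G p q a b c d)
   = (\<Sum>a\<in>A. \<Sum>b\<in>B. \<Sum>c\<in>C. \<Sum>d\<in>D. \<Sum>p\<in>P. \<Sum>q\<in>Q. G p q a b c d)"
  by (subst sum_swap2) (intro sum.cong refl sum_swap2)

definition linear_vec :: "(('a \<Rightarrow> 'k::field) \<Rightarrow> ('b \<Rightarrow> 'k)) \<Rightarrow> bool" where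
  "linear_vec f \<longleftrightarrow> (\<forall>x y. f (x + y) = f x + f y) \<and> (\<forall>c x. f (smul c x) = smul c (f x))"

lemma linear_vec_add: "linear_vec f \<Longrightarrow> f (x + y) = f x + f y"
  by (simp add: linear_vec_def)

lemma linear_vec_smul: "linear_vec f \<Longrightarrow> f (smul c x) = smul c (f x)"
  by (simp add: linear_vec_def)

lemma linear_vec_zero: "linear_vec f \<Longrightarrow> f 0 = 0"
  using linear_vec_smul[of f 0 0] by simp

lemma linear_vec_sum: "linear_vec f \<Longrightarrow> f (\<Sum>j\<in>A. g j) = (\<Sum>j\<in>A. f (g j))"
  by (induct A rule: infinite_finite_induct) (auto simp: linear_vec_zero linear_vec_add)

lemma linear_vec_comb:
  "linear_vec f \<Longrightarrow> f (\<Sum>j\<in>A. smul (c j) (g j)) = (\<Sum>j\<in>A. smul (c j) (f (g j)))"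
  by (simp only: linear_vec_sum linear_vec_smul)

lemma linear_vec_expand:
  "linear_vec f \<Longrightarrow> f (x::'i::finite \<Rightarrow> 'k::field) = (\<Sum>p\<in>UNIV. smul (x p) (f (basis_vec p)))"
  by (subst basis_expansion[of x]) (simp add: linear_vec_comb)

lemma linear_vec_collapse:
  "linear_vec f \<Longrightarrow> (\<Sum>p\<in>UNIV. smul (x p) (f (basis_vec p))) = f (x::'i::finite \<Rightarrow> 'k::field)"
  by (rule linear_vec_expand[symmetric])

lemma linear_vec_id: "linear_vec (\<lambda>x. x)"
  by (simp add: linear_vec_def)

lemma linear_vec_comp: "linear_vec f \<Longrightarrow> linear_vec g \<Longrightarrow> linear_vec (\<lambda>x. f (g x))"
  by (simp add: linear_vec_def)

lemma linear_vec_smulI: "linear_vec g \<Longrightarrow> linear_vec (\<lambda>x. smul c (g x))"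
  by (simp add: linear_vec_def smul_add_right mult.commute)

lemma linear_vec_coordI: "linear_vec g \<Longrightarrow> linear_vec (\<lambda>x. smul (g x k) w)"
  by (simp add: linear_vec_def smul_add_left fun_eq_iff mult.assoc smul_apply)

lemma linear_vec_sumI: "(\<And>j. linear_vec (G j)) \<Longrightarrow> linear_vec (\<lambda>z. \<Sum>j\<in>A. G j z)"
  by (simp add: linear_vec_def sum.distrib smul_sum_right)

lemma linear_vec_inj_imp_surj:
  fixes L :: "('i::finite \<Rightarrow> 'k::field) \<Rightarrow> 'i \<Rightarrow> 'k"
  assumes lin: "linear_vec L" and inj: "inj L"
  shows "surj L"
proof -
  define Lv where "Lv a = vec_lambda (L (vec_nth a))" for a :: "'k^'i"
  have "vec_nth (a + b) = vec_nth a + vec_nth b" "vec_nth (c *s a) = smul c (vec_nth a)" for a b :: "'k^'i" and c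
    by (simp_all add: fun_eq_iff smul_apply)
  then have "Vector_Spaces.linear (*s) (*s) Lv"
    by (simp add: Vector_Spaces.linear_iff vec.vector_space_axioms Lv_def vec_eq_iff smul_apply
        linear_vec_add[OF lin] linear_vec_smul[OF lin])
  moreover have "inj Lv"
  proof (rule injI)
    fix a b assume "Lv a = Lv b"
    then have "L (vec_nth a) = L (vec_nth b)"
      by (simp add: Lv_def vec_lambda_inject)
    then show "a = b"
      using inj by (simp add: inj_eq vec_nth_inject)
  qed
  ultimately have "surj Lv"
    by (rule vec.linear_inj_imp_surj)
  show ?thesis
  proof (rule surjI)
    fix y
    show "L (vec_nth (inv Lv (vec_lambda y))) = y"
      using surj_f_inv_f[OF \<open>surj Lv\<close>, of "vec_lambda y"] by (simp add: Lv_def vec_lambda_inject)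
  qed
qed

definition bilinear_vec :: "(('a \<Rightarrow> 'k::field) \<Rightarrow> ('a \<Rightarrow> 'k) \<Rightarrow> ('b \<Rightarrow> 'k)) \<Rightarrow> bool" where
  "bilinear_vec G \<longleftrightarrow> (\<forall>y. linear_vec (\<lambda>x. G x y)) \<and> (\<forall>x. linear_vec (\<lambda>y. G x y))"

lemma bilinear_vecI:
  "(\<And>y. linear_vec (\<lambda>x. G x y)) \<Longrightarrow> (\<And>x. linear_vec (\<lambda>y. G x y)) \<Longrightarrow> bilinear_vec G"
  by (simp add: bilinear_vec_def)

lemma bilinear_vec_linear_left: "bilinear_vec G \<Longrightarrow> linear_vec (\<lambda>x. G x y)"
  by (simp add: bilinear_vec_def)

lemma bilinear_vec_linear_right: "bilinear_vec G \<Longrightarrow> linear_vec (\<lambda>y. G x y)"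
  by (simp add: bilinear_vec_def)

lemma bilinear_vec_expand:
  assumes "bilinear_vec G"
  shows "G x y = (\<Sum>p\<in>UNIV. \<Sum>q\<in>UNIV. smul (x p * y q) (G (basis_vec p) (basis_vec (q::'i::finite))))"
proof -
  have "G x y = (\<Sum>p\<in>UNIV. smul (x p) (G (basis_vec p) y))"
    by (rule linear_vec_expand[OF bilinear_vec_linear_left[OF assms]])
  also have "\<dots> = (\<Sum>p\<in>UNIV. smul (x p) (\<Sum>q\<in>UNIV. smul (y q) (G (basis_vec p) (basis_vec q))))"
    by (subst linear_vec_expand[OF bilinear_vec_linear_right[OF assms]]) (rule refl)
  finally show ?thesis
    by (simp add: smul_sum_right)
qed

section \<open>Sweedler sums\<close>

text \<open>\<^term>\<open>sweedler (comult C x) F\<close> is the Sweedler sum \<open>\<Sum> F x\<^sub>(\<^sub>1\<^sub>) x\<^sub>(\<^sub>2\<^sub>)\<close>,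
  with \<open>F\<close> given on basis indices.\<close>

definition sweedler :: "('a \<times> 'a \<Rightarrow> 'k::field) \<Rightarrow> ('a \<Rightarrow> 'a \<Rightarrow> 'b \<Rightarrow> 'k) \<Rightarrow> 'b \<Rightarrow> 'k" where
  "sweedler X F = (\<Sum>a\<in>UNIV. \<Sum>b\<in>UNIV. smul (X (a, b)) (F a b))"

lemma sweedler_apply: "sweedler X F j = (\<Sum>a\<in>UNIV. \<Sum>b\<in>UNIV. X (a, b) * F a b j)"
  by (simp add: sweedler_def sum_fun_apply smul_apply)

lemma sweedler_cong: "(\<And>a b. F a b = G a b) \<Longrightarrow> sweedler X F = sweedler X G"
  by (simp add: sweedler_def)

lemma sweedler_linear: "linear_vec f \<Longrightarrow> sweedler X (\<lambda>a b. f (F a b)) = f (sweedler X F)"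
  by (simp only: sweedler_def linear_vec_sum linear_vec_smul)

lemma sweedler_swap:
  "sweedler X (\<lambda>a b. sweedler Y (\<lambda>c d. F a b c d)) = sweedler Y (\<lambda>c d. sweedler X (\<lambda>a b. F a b c d))"
  unfolding sweedler_def smul_sum_right smul_smul
  by (subst sum_swap2) (simp add: mult.commute)

lemma sweedler_sum: "sweedler X (\<lambda>a b. \<Sum>j\<in>A. F j a b) = (\<Sum>j\<in>A. sweedler X (F j))"
  unfolding sweedler_def smul_sum_right
  by (subst sum.swap, rule sum.cong[OF refl], rule sum.swap)

lemma sweedler_smul: "sweedler X (\<lambda>a b. smul c (F a b)) = smul c (sweedler X F)"
  by (simp add: sweedler_def smul_sum_right mult.commute)

lemma sweedler_smul_weights: "sweedler (\<lambda>p. c * X p) F = smul c (sweedler X F)"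
  by (simp add: sweedler_def smul_sum_right)

lemma sweedler_add_weights: "sweedler (\<lambda>p. X p + Y p) F = sweedler X F + sweedler Y F"
  by (simp add: sweedler_def smul_add_left sum.distrib)

lemma linear_vec_sweedler:
  "(\<And>p q. linear_vec (\<lambda>z. G z p q)) \<Longrightarrow> linear_vec (\<lambda>z. sweedler X (\<lambda>p q. G z p q))"
  unfolding linear_vec_def sweedler_def
  by (simp add: smul_add_right sum.distrib smul_sum_right mult.commute)

section \<open>Calculus in a finite dimensional Hopf algebra\<close>

locale hopf =
  fixes M :: "'i::finite \<Rightarrow> 'i \<Rightarrow> 'i \<Rightarrow> 'k::field"
    and u :: "'i \<Rightarrow> 'k" and C :: "'i \<Rightarrow> 'i \<Rightarrow> 'i \<Rightarrow> 'k"
    and ep :: "'i \<Rightarrow> 'k" and S :: "'i \<Rightarrow> 'i \<Rightarrow> 'k"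
  assumes hopf_algebra: "hopf_algebra M u C ep S"
begin

abbreviation mul where "mul \<equiv> hmult M"
abbreviation \<Delta> where "\<Delta> \<equiv> comult C"
abbreviation \<epsilon> where "\<epsilon> \<equiv> counit ep"
abbreviation ant where "ant \<equiv> antip S"
abbreviation e :: "'i \<Rightarrow> 'i \<Rightarrow> 'k" where "e \<equiv> basis_vec"

lemma assoc: "mul (mul x y) z = mul x (mul y z)"
  using hopf_algebra by (simp add: hopf_algebra_def)

lemma unit_left: "mul u x = x"
  using hopf_algebra by (simp add: hopf_algebra_def)

lemma unit_right: "mul x u = x"
  using hopf_algebra by (simp add: hopf_algebra_def)

lemma coassoc: "(\<Sum>i\<in>UNIV. \<Delta> x (i, c) * C i a b) = (\<Sum>j\<in>UNIV. \<Delta> x (a, j) * C j b c)"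
proof -
  have "(\<lambda>(a, b, c). \<Sum>i\<in>UNIV. \<Delta> x (i, c) * C i a b) = (\<lambda>(a, b, c). \<Sum>j\<in>UNIV. \<Delta> x (a, j) * C j b c)"
    using hopf_algebra by (simp add: hopf_algebra_def)
  from fun_cong[OF this, of "(a, b, c)"] show ?thesis
    by simp
qed

lemma counit_left: "(\<Sum>i\<in>UNIV. ep i * \<Delta> x (i, j)) = x j"
proof -
  have "(\<lambda>j. \<Sum>i\<in>UNIV. ep i * \<Delta> x (i, j)) = x"
    using hopf_algebra by (simp add: hopf_algebra_def)
  from fun_cong[OF this, of j] show ?thesis
    by simp
qed

lemma counit_right: "(\<Sum>j\<in>UNIV. \<Delta> x (i, j) * ep j) = x i"
proof -
  have "(\<lambda>i. \<Sum>j\<in>UNIV. \<Delta> x (i, j) * ep j) = x"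
    using hopf_algebra by (simp add: hopf_algebra_def)
  from fun_cong[OF this, of i] show ?thesis
    by simp
qed

lemma comult_mul: "\<Delta> (mul x y) = tmult M (\<Delta> x) (\<Delta> y)"
  using hopf_algebra by (simp add: hopf_algebra_def)

lemma comult_unit: "\<Delta> u = (\<lambda>(p, q). u p * u q)"
  using hopf_algebra by (simp add: hopf_algebra_def)

lemma counit_mul: "\<epsilon> (mul x y) = \<epsilon> x * \<epsilon> y"
  using hopf_algebra by (simp add: hopf_algebra_def)

lemma counit_unit: "\<epsilon> u = 1"
  using hopf_algebra by (simp add: hopf_algebra_def)

lemma antipode_left: "sweedler (\<Delta> x) (\<lambda>i j. mul (ant (e i)) (e j)) = smul (\<epsilon> x) u"
  using hopf_algebra by (simp add: hopf_algebra_def sweedler_def fun_eq_iff sum_fun_apply smul_apply)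

lemma antipode_right: "sweedler (\<Delta> x) (\<lambda>i j. mul (e i) (ant (e j))) = smul (\<epsilon> x) u"
  using hopf_algebra by (simp add: hopf_algebra_def sweedler_def fun_eq_iff sum_fun_apply smul_apply)

lemma mul_basis_vec: "mul (e a) (e b) = M a b"
proof
  fix l
  have "mul (e a) (e b) l = (\<Sum>i\<in>UNIV. \<Sum>j\<in>UNIV. e a i * (e b j * M i j l))"
    by (simp add: hmult_def mult.assoc)
  also have "\<dots> = (\<Sum>i\<in>UNIV. e a i * (\<Sum>j\<in>UNIV. e b j * M i j l))"
    by (simp add: sum_distrib_left)
  finally show "mul (e a) (e b) l = M a b l"
    by (simp add: sum_basis_vec_left)
qed

lemma comult_basis_vec: "\<Delta> (e l) (a, b) = C l a b"
  by (simp add: comult_def sum_basis_vec_left)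

lemma counit_basis_vec: "\<epsilon> (e l) = ep l"
  by (simp add: counit_def sum_basis_vec_left)

lemma counit_add: "\<epsilon> (x + y) = \<epsilon> x + \<epsilon> y"
  by (simp add: counit_def algebra_simps sum.distrib)

lemma counit_smul: "\<epsilon> (smul c x) = c * \<epsilon> x"
  by (simp add: counit_def smul_apply sum_distrib_left mult.assoc)

lemma counit_zero: "\<epsilon> 0 = 0"
  by (simp add: counit_def)

lemma counit_sum: "\<epsilon> (\<Sum>j\<in>A. f j) = (\<Sum>j\<in>A. \<epsilon> (f j))"
  by (simp add: counit_def sum_fun_apply sum_distrib_right) (rule sum.swap)

lemma linear_mul_left: "linear_vec (\<lambda>x. mul x y)"
  by (simp add: linear_vec_def hmult_def fun_eq_iff smul_apply algebra_simps sum.distrib sum_distrib_left)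

lemma linear_mul_right: "linear_vec (\<lambda>y. mul x y)"
  by (simp add: linear_vec_def hmult_def fun_eq_iff smul_apply algebra_simps sum.distrib sum_distrib_left)

lemma linear_ant: "linear_vec ant"
  by (simp add: linear_vec_def antip_def fun_eq_iff smul_apply algebra_simps sum.distrib sum_distrib_left)

lemma linear_comult: "linear_vec \<Delta>"
  by (simp add: linear_vec_def comult_def fun_eq_iff smul_apply algebra_simps sum.distrib sum_distrib_left)

lemma linear_vec_mulL: "linear_vec g \<Longrightarrow> linear_vec (\<lambda>x. mul (g x) y)"
  by (rule linear_vec_comp[OF linear_mul_left])

lemma linear_vec_mulR: "linear_vec g \<Longrightarrow> linear_vec (\<lambda>x. mul y (g x))"
  by (rule linear_vec_comp[OF linear_mul_right])

lemma linear_vec_antI: "linear_vec g \<Longrightarrow> linear_vec (\<lambda>x. ant (g x))"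
  by (rule linear_vec_comp[OF linear_ant])

lemma linear_vec_sweedler_comult: "linear_vec (\<lambda>z. sweedler (\<Delta> z) F)"
proof -
  have "\<Delta> (x + y) = (\<lambda>p. \<Delta> x p + \<Delta> y p)" "\<Delta> (smul c x) = (\<lambda>p. c * \<Delta> x p)" for x y c
    using linear_vec_add[OF linear_comult, of x y] linear_vec_smul[OF linear_comult, of c x]
    by (simp_all add: fun_eq_iff smul_apply)
  then show ?thesis
    by (simp add: linear_vec_def sweedler_add_weights sweedler_smul_weights)
qed

lemmas linear_vec_intros = linear_vec_id linear_vec_mulL linear_vec_mulR linear_vec_antI
  linear_vec_smulI linear_vec_coordI linear_vec_sumI linear_vec_sweedler linear_vec_sweedler_comult

lemma sweedler_counit_left: "sweedler (\<Delta> x) (\<lambda>a b. smul (ep a) (G b)) = (\<Sum>b\<in>UNIV. smul (x b) (G b))"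
proof -
  have "sweedler (\<Delta> x) (\<lambda>a b. smul (ep a) (G b)) = (\<Sum>b\<in>UNIV. \<Sum>a\<in>UNIV. smul (ep a * \<Delta> x (a, b)) (G b))"
    unfolding sweedler_def by (subst sum.swap) (simp add: mult.commute)
  then show ?thesis
    by (simp add: smul_sum_left[symmetric] counit_left)
qed

lemma sweedler_counit_right: "sweedler (\<Delta> x) (\<lambda>a b. smul (ep b) (G a)) = (\<Sum>a\<in>UNIV. smul (x a) (G a))"
  by (simp add: sweedler_def smul_sum_left[symmetric] counit_right)

lemma sweedler_coassoc:
  "sweedler (\<Delta> x) (\<lambda>i c. sweedler (\<Delta> (e i)) (\<lambda>a b. F a b c))
   = sweedler (\<Delta> x) (\<lambda>a j. sweedler (\<Delta> (e j)) (\<lambda>b c. F a b c))"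
proof -
  have "sweedler (\<Delta> x) (\<lambda>i c. sweedler (\<Delta> (e i)) (\<lambda>a b. F a b c))
      = (\<Sum>a\<in>UNIV. \<Sum>b\<in>UNIV. \<Sum>c\<in>UNIV. \<Sum>i\<in>UNIV. smul (\<Delta> x (i, c) * C i a b) (F a b c))"
    unfolding sweedler_def comult_basis_vec smul_sum_right smul_smul
    by (subst sum_swap2) (intro sum.cong refl sum.swap)
  also have "\<dots> = (\<Sum>a\<in>UNIV. \<Sum>b\<in>UNIV. \<Sum>c\<in>UNIV. \<Sum>j\<in>UNIV. smul (\<Delta> x (a, j) * C j b c) (F a b c))"
    by (simp add: smul_sum_left[symmetric] coassoc)
  also have "\<dots> = (\<Sum>a\<in>UNIV. \<Sum>b\<in>UNIV. \<Sum>j\<in>UNIV. \<Sum>c\<in>UNIV. smul (\<Delta> x (a, j) * C j b c) (F a b c))"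
    by (intro sum.cong refl sum.swap)
  also have "\<dots> = (\<Sum>a\<in>UNIV. \<Sum>j\<in>UNIV. \<Sum>b\<in>UNIV. \<Sum>c\<in>UNIV. smul (\<Delta> x (a, j) * C j b c) (F a b c))"
    by (intro sum.cong refl sum.swap)
  also have "\<dots> = sweedler (\<Delta> x) (\<lambda>a j. sweedler (\<Delta> (e j)) (\<lambda>b c. F a b c))"
    by (simp add: sweedler_def comult_basis_vec smul_sum_right)
  finally show ?thesis .
qed

lemma sweedler_comult_mul:
  assumes "bilinear_vec G"
  shows "sweedler (\<Delta> (mul x y)) (\<lambda>a b. G (e a) (e b))
       = sweedler (\<Delta> x) (\<lambda>a1 a2. sweedler (\<Delta> y) (\<lambda>b1 b2. G (mul (e a1) (e b1)) (mul (e a2) (e b2))))"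
proof -
  have "sweedler (\<Delta> (mul x y)) (\<lambda>a b. G (e a) (e b))
      = (\<Sum>p\<in>UNIV. \<Sum>q\<in>UNIV. \<Sum>i\<in>UNIV. \<Sum>j\<in>UNIV. \<Sum>i'\<in>UNIV. \<Sum>j'\<in>UNIV.
           smul (\<Delta> x (i, j) * \<Delta> y (i', j') * M i i' p * M j j' q) (G (e p) (e q)))"
    by (simp only: sweedler_def comult_mul tmult_def case_prod_conv smul_sum_left)
  also have "\<dots> = (\<Sum>i\<in>UNIV. \<Sum>j\<in>UNIV. \<Sum>i'\<in>UNIV. \<Sum>j'\<in>UNIV. \<Sum>p\<in>UNIV. \<Sum>q\<in>UNIV.
           smul (\<Delta> x (i, j) * \<Delta> y (i', j') * M i i' p * M j j' q) (G (e p) (e q)))"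
    by (rule sum_swap2_4)
  also have "\<dots> = sweedler (\<Delta> x) (\<lambda>a1 a2. sweedler (\<Delta> y) (\<lambda>b1 b2. G (mul (e a1) (e b1)) (mul (e a2) (e b2))))"
    unfolding sweedler_def mul_basis_vec
    by (subst bilinear_vec_expand[OF assms]) (simp add: smul_sum_right mult.assoc)
  finally show ?thesis .
qed

lemma sweedler_comult_unit:
  assumes "bilinear_vec G"
  shows "sweedler (\<Delta> u) (\<lambda>a b. G (e a) (e b)) = G u u"
  by (subst bilinear_vec_expand[OF assms, of u u]) (simp add: sweedler_def comult_unit)

lemma antipode_left_linear:
  assumes "linear_vec f"
  shows "sweedler (\<Delta> x) (\<lambda>a b. f (mul (ant (e a)) (e b))) = smul (\<epsilon> x) (f u)"
  by (simp only: sweedler_linear[OF assms] antipode_left linear_vec_smul[OF assms])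

lemma antipode_right_linear:
  assumes "linear_vec f"
  shows "sweedler (\<Delta> x) (\<lambda>a b. f (mul (e a) (ant (e b)))) = smul (\<epsilon> x) (f u)"
  by (simp only: sweedler_linear[OF assms] antipode_right linear_vec_smul[OF assms])

lemma antipode_right_sandwich:
  "sweedler (\<Delta> z) (\<lambda>b c. mul p (mul q (mul (e b) (mul (ant (e c)) r)))) = smul (\<epsilon> z) (mul p (mul q r))"
proof -
  have "linear_vec (\<lambda>v. mul p (mul q (mul v r)))"
    by (intro linear_vec_intros)
  from antipode_right_linear[OF this, of z] show ?thesis
    by (simp only: assoc unit_left)
qed

lemma bilinear_mul_ant:
  assumes "linear_vec f"
  shows "bilinear_vec (\<lambda>p q. f (mul (ant p) q))"
  using linear_vec_comp[OF assms linear_vec_mulL[OF linear_ant]] linear_vec_comp[OF assms linear_mul_right]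
  by (rule bilinear_vecI)

lemma antipode_left_mul_linear:
  assumes "linear_vec f"
  shows "sweedler (\<Delta> x) (\<lambda>a1 a2. sweedler (\<Delta> y) (\<lambda>b1 b2. f (mul (ant (mul (e a1) (e b1))) (mul (e a2) (e b2)))))
       = smul (\<epsilon> x * \<epsilon> y) (f u)"
  by (simp only: sweedler_comult_mul[OF bilinear_mul_ant[OF assms], symmetric]
      antipode_left_linear[OF assms] counit_mul)

lemma ant_unit: "ant u = u"
proof -
  have "mul (ant u) u = sweedler (\<Delta> u) (\<lambda>a b. mul (ant (e a)) (e b))"
    by (rule sweedler_comult_unit[OF bilinear_mul_ant[OF linear_vec_id], symmetric])
  then show ?thesis
    by (simp add: antipode_left counit_unit unit_right)
qed

lemma counit_ant: "\<epsilon> (ant x) = \<epsilon> x"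
proof -
  have "\<epsilon> (ant x) = (\<Sum>a\<in>UNIV. (\<Sum>b\<in>UNIV. \<Delta> x (a, b) * ep b) * \<epsilon> (ant (e a)))"
    by (subst linear_vec_expand[OF linear_ant]) (simp add: counit_sum counit_smul counit_right)
  also have "\<dots> = \<epsilon> (sweedler (\<Delta> x) (\<lambda>a b. mul (ant (e a)) (e b)))"
    by (simp add: sweedler_def counit_sum counit_smul counit_mul counit_basis_vec
        sum_distrib_left sum_distrib_right mult_ac)
  also have "\<dots> = \<epsilon> x"
    by (simp add: antipode_left counit_smul counit_unit)
  finally show ?thesis .
qed

lemma ant_mul: "ant (mul x y) = mul (ant y) (ant x)"
proof -
  txt \<open>Both sides are values of \<open>\<Sum> S(x\<^sub>1 y\<^sub>1) x\<^sub>2 y\<^sub>2 S(y\<^sub>3) S(x\<^sub>3)\<close>, contracted in two ways.\<close>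
  define W where "W a1 a2 a3 b1 b2 b3 = mul (mul (ant (mul (e a1) (e b1))) (mul (e a2) (e b2)))
      (mul (ant (e b3)) (ant (e a3)))" for a1 a2 a3 b1 b2 b3
  define Z where "Z = sweedler (\<Delta> x) (\<lambda>i a3. sweedler (\<Delta> (e i)) (\<lambda>a1 a2.
      sweedler (\<Delta> y) (\<lambda>j b3. sweedler (\<Delta> (e j)) (\<lambda>b1 b2. W a1 a2 a3 b1 b2 b3))))"
  have "Z = sweedler (\<Delta> x) (\<lambda>i a3. sweedler (\<Delta> y) (\<lambda>j b3.
      sweedler (\<Delta> (e i)) (\<lambda>a1 a2. sweedler (\<Delta> (e j)) (\<lambda>b1 b2. W a1 a2 a3 b1 b2 b3))))"
    unfolding Z_def by (intro sweedler_cong sweedler_swap)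
  also have "\<dots> = sweedler (\<Delta> x) (\<lambda>i a3. smul (ep i)
      (sweedler (\<Delta> y) (\<lambda>j b3. smul (ep j) (mul (ant (e b3)) (ant (e a3))))))"
    unfolding W_def sweedler_smul[symmetric]
    by (simp only: antipode_left_mul_linear[OF linear_mul_left] counit_basis_vec unit_left smul_smul)
  also have "\<dots> = mul (ant y) (ant x)"
    by (simp add: sweedler_counit_left linear_vec_collapse[OF linear_vec_mulL[OF linear_ant]]
        linear_vec_collapse[OF linear_vec_mulR[OF linear_ant]])
  finally have Z_rhs: "Z = mul (ant y) (ant x)" .
  have "Z = sweedler (\<Delta> x) (\<lambda>a1 k. sweedler (\<Delta> (e k)) (\<lambda>a2 a3.
      sweedler (\<Delta> y) (\<lambda>b1 k'. sweedler (\<Delta> (e k')) (\<lambda>b2 b3. W a1 a2 a3 b1 b2 b3))))"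
    unfolding Z_def by (simp only: sweedler_coassoc)
  also have "\<dots> = sweedler (\<Delta> x) (\<lambda>a1 k. sweedler (\<Delta> (e k)) (\<lambda>a2 a3.
      sweedler (\<Delta> y) (\<lambda>b1 k'. smul (ep k') (mul (ant (mul (e a1) (e b1))) (mul (e a2) (ant (e a3)))))))"
    unfolding W_def assoc by (simp only: antipode_right_sandwich counit_basis_vec)
  also have "\<dots> = sweedler (\<Delta> x) (\<lambda>a1 k. sweedler (\<Delta> (e k)) (\<lambda>a2 a3.
      mul (ant (mul (e a1) y)) (mul (e a2) (ant (e a3)))))"
    unfolding sweedler_counit_right
    by (intro sweedler_cong linear_vec_collapse linear_vec_intros)
  also have "\<dots> = sweedler (\<Delta> x) (\<lambda>a1 k. smul (ep k) (ant (mul (e a1) y)))"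
    by (intro sweedler_cong)
      (simp only: antipode_right_linear[OF linear_mul_right] counit_basis_vec unit_right)
  also have "\<dots> = ant (mul x y)"
    by (simp only: sweedler_counit_right linear_vec_collapse[OF linear_vec_antI[OF linear_mul_left]])
  finally show ?thesis
    using Z_rhs by simp
qed

section \<open>Existence and uniqueness of right integrals\<close>

lemma rint_mul: "x \<in> rint M ep \<Longrightarrow> mul x h = smul (\<epsilon> h) x"
  by (simp add: rint_def smul_def)

lemma rintI: "(\<And>h. mul x h = smul (\<epsilon> h) x) \<Longrightarrow> x \<in> rint M ep"
  by (simp add: rint_def smul_def)

lemma rint_add: "x \<in> rint M ep \<Longrightarrow> y \<in> rint M ep \<Longrightarrow> x + y \<in> rint M ep"
  by (rule rintI) (simp add: linear_vec_add[OF linear_mul_left] rint_mul smul_add_right)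

lemma rint_smul: "x \<in> rint M ep \<Longrightarrow> smul c x \<in> rint M ep"
  by (rule rintI) (simp add: linear_vec_smul[OF linear_mul_left] rint_mul mult.commute)

lemma rint_mul_left: "x \<in> rint M ep \<Longrightarrow> mul h x \<in> rint M ep"
  by (rule rintI) (simp add: assoc rint_mul linear_vec_smul[OF linear_mul_right])

lemma sweedler_antipode_right_contract:
  assumes F: "bilinear_vec F"
  shows "sweedler (\<Delta> w) (\<lambda>w1 j. sweedler (\<Delta> (e j)) (\<lambda>w2 w3. F (mul (e w1) (ant (e w2))) (e w3))) = F u w"
proof -
  have "sweedler (\<Delta> w) (\<lambda>w1 j. sweedler (\<Delta> (e j)) (\<lambda>w2 w3. F (mul (e w1) (ant (e w2))) (e w3)))
      = sweedler (\<Delta> w) (\<lambda>i w3. sweedler (\<Delta> (e i)) (\<lambda>w1 w2. F (mul (e w1) (ant (e w2))) (e w3)))"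
    by (rule sweedler_coassoc[symmetric])
  also have "\<dots> = sweedler (\<Delta> w) (\<lambda>i w3. smul (ep i) (F u (e w3)))"
    by (simp only: antipode_right_linear[OF bilinear_vec_linear_left[OF F]] counit_basis_vec)
  also have "\<dots> = F u w"
    by (simp only: sweedler_counit_left linear_vec_collapse[OF bilinear_vec_linear_right[OF F]])
  finally show ?thesis .
qed

lemma sweedler_antipode_twisted_contract:
  assumes F: "bilinear_vec F"
  shows "sweedler (\<Delta> h) (\<lambda>h1 j. sweedler (\<Delta> (e j)) (\<lambda>h2 h3.
      F (mul (ant (ant (e h2))) (ant (e h1))) (e h3))) = F u h"
proof -
  have "bilinear_vec (\<lambda>p q. F (ant p) q)"
    using linear_vec_comp[OF bilinear_vec_linear_left[OF F] linear_ant] bilinear_vec_linear_right[OF F]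
    by (rule bilinear_vecI)
  from sweedler_antipode_right_contract[OF this, of h] show ?thesis
    by (simp only: ant_mul ant_unit)
qed

text \<open>In Sweedler notation \<^term>\<open>integral_map v\<close> is \<open>\<Sum>\<^sub>i \<langle>e\<^sup>i, v S\<^sup>2(e\<^sub>i\<^sub>(\<^sub>1\<^sub>))\<rangle> e\<^sub>i\<^sub>(\<^sub>2\<^sub>)\<close>,
  with \<open>e\<^sup>i\<close> the dual basis.\<close>

definition integral_map :: "('i \<Rightarrow> 'k) \<Rightarrow> 'i \<Rightarrow> 'k" where
  "integral_map v = (\<Sum>i\<in>UNIV. sweedler (\<Delta> (e i)) (\<lambda>c d. smul (mul v (ant (ant (e c))) i) (e d)))"

lemma linear_integral_map: "linear_vec integral_map"
  unfolding integral_map_def[abs_def] by (intro linear_vec_intros)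

lemma sweedler_coeff_mul_transfer:
  "(\<Sum>i\<in>UNIV. sweedler (\<Delta> (mul (e i) w)) (\<lambda>p q. smul (mul (Y p) g i) (e q)))
   = (\<Sum>k\<in>UNIV. sweedler (\<Delta> (mul (mul (e k) g) w)) (\<lambda>p q. smul (Y p k) (e q)))"
proof -
  have coeff: "mul (Y p) g i = (\<Sum>k\<in>UNIV. Y p k * mul (e k) g i)" for p i
    by (subst linear_vec_expand[OF linear_mul_left]) (simp only: sum_fun_apply smul_apply)
  have "(\<Sum>i\<in>UNIV. sweedler (\<Delta> (mul (e i) w)) (\<lambda>p q. smul (mul (Y p) g i) (e q)))
      = (\<Sum>i\<in>UNIV. \<Sum>k\<in>UNIV. smul (mul (e k) g i) (sweedler (\<Delta> (mul (e i) w)) (\<lambda>p q. smul (Y p k) (e q))))"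
  proof -
    have "smul (mul (Y p) g i) (e q) = (\<Sum>k\<in>UNIV. smul (mul (e k) g i) (smul (Y p k) (e q)))" for p q i
      by (simp add: coeff smul_sum_left mult.commute)
    then show ?thesis
      by (simp only: sweedler_sum sweedler_smul)
  qed
  also have "\<dots> = (\<Sum>k\<in>UNIV. \<Sum>i\<in>UNIV. smul (mul (e k) g i) (sweedler (\<Delta> (mul (e i) w)) (\<lambda>p q. smul (Y p k) (e q))))"
    by (rule sum.swap)
  also have "\<dots> = (\<Sum>k\<in>UNIV. sweedler (\<Delta> (mul (mul (e k) g) w)) (\<lambda>p q. smul (Y p k) (e q)))"
    by (intro sum.cong refl linear_vec_collapse linear_vec_comp[OF linear_vec_sweedler_comult linear_mul_left])
  finally show ?thesis .
qed

lemma integral_map_mul_right: "mul (integral_map v) h = smul (\<epsilon> h) (integral_map v)"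
proof -
  define G where "G i h1 p q = smul (mul (mul v (ant (ant p))) (ant (e h1)) i) q"
    for i h1 p and q :: "'i \<Rightarrow> 'k"
  have G: "bilinear_vec (G i h1)" for i h1
    unfolding G_def by (rule bilinear_vecI) (intro linear_vec_intros)+
  define \<Psi> where "\<Psi> k z = sweedler (\<Delta> (mul (e k) z)) (\<lambda>p q. smul (mul v (ant (ant (e p))) k) (e q))" for k z
  have \<Psi>: "linear_vec (\<Psi> k)" for k
    unfolding \<Psi>_def[abs_def] by (rule linear_vec_comp[OF linear_vec_sweedler_comult linear_mul_right])
  have "smul (mul v (ant (ant (e c))) i) (mul (e d) h)
      = sweedler (\<Delta> h) (\<lambda>h1 j. sweedler (\<Delta> (e j)) (\<lambda>h2 h3. G i h1 (mul (e c) (e h2)) (mul (e d) (e h3))))"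
    for c d i
  proof -
    have "bilinear_vec (\<lambda>p q. smul (mul (mul v (ant (ant (e c)))) p i) (mul (e d) q))"
      by (rule bilinear_vecI) (intro linear_vec_intros)+
    from sweedler_antipode_twisted_contract[OF this, of h, symmetric] show ?thesis
      by (simp add: G_def unit_right ant_mul assoc)
  qed
  then have "mul (integral_map v) h = (\<Sum>i\<in>UNIV. sweedler (\<Delta> (e i)) (\<lambda>c d.
      sweedler (\<Delta> h) (\<lambda>h1 j. sweedler (\<Delta> (e j)) (\<lambda>h2 h3. G i h1 (mul (e c) (e h2)) (mul (e d) (e h3))))))"
    unfolding integral_map_def
    by (simp only: linear_vec_sum[OF linear_mul_left] sweedler_linear[OF linear_mul_left, symmetric]
        linear_vec_smul[OF linear_mul_left])
  also have "\<dots> = (\<Sum>i\<in>UNIV. sweedler (\<Delta> h) (\<lambda>h1 j.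
      sweedler (\<Delta> (e i)) (\<lambda>c d. sweedler (\<Delta> (e j)) (\<lambda>h2 h3. G i h1 (mul (e c) (e h2)) (mul (e d) (e h3))))))"
    by (intro sum.cong refl sweedler_swap)
  also have "\<dots> = sweedler (\<Delta> h) (\<lambda>h1 j. \<Sum>i\<in>UNIV. sweedler (\<Delta> (mul (e i) (e j))) (\<lambda>p q. G i h1 (e p) (e q)))"
    by (simp only: sweedler_comult_mul[OF G, symmetric] sweedler_sum)
  also have "\<dots> = sweedler (\<Delta> h) (\<lambda>h1 j. \<Sum>k\<in>UNIV. \<Psi> k (mul (ant (e h1)) (e j)))"
    unfolding G_def \<Psi>_def by (simp only: sweedler_coeff_mul_transfer) (simp only: assoc)
  also have "\<dots> = smul (\<epsilon> h) (\<Sum>k\<in>UNIV. \<Psi> k u)"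
    by (simp only: sweedler_linear[OF linear_vec_sumI[OF \<Psi>]] antipode_left linear_vec_smul[OF linear_vec_sumI[OF \<Psi>]])
  finally show ?thesis
    by (simp only: \<Psi>_def integral_map_def unit_right)
qed

lemma integral_map_in_rint: "integral_map v \<in> rint M ep"
  by (rule rintI) (rule integral_map_mul_right)

lemma sum_sweedler_coord:
  "(\<Sum>i\<in>UNIV. sweedler (\<Delta> (e i)) (\<lambda>c d. smul (sweedler Y (\<lambda>a b. smul (R a c) (e b)) i) (G c d)))
   = sweedler Y (\<lambda>a i. sweedler (\<Delta> (e i)) (\<lambda>c d. smul (R a c) (G c d)))"
proof -
  have coord: "sweedler Y (\<lambda>a b. smul (R a c) (e b)) i = (\<Sum>a\<in>UNIV. Y (a, i) * R a c)" for c i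
    by (simp add: sweedler_apply smul_apply mult_ac sum_basis_vec_right)
  have "(\<Sum>i\<in>UNIV. sweedler (\<Delta> (e i)) (\<lambda>c d. smul (sweedler Y (\<lambda>a b. smul (R a c) (e b)) i) (G c d)))
      = (\<Sum>i\<in>UNIV. \<Sum>c\<in>UNIV. \<Sum>d\<in>UNIV. \<Sum>a\<in>UNIV. smul (Y (a, i) * (C i c d * R a c)) (G c d))"
    unfolding coord
    by (simp add: sweedler_def comult_basis_vec smul_sum_left smul_sum_right sum_distrib_left mult_ac)
  also have "\<dots> = (\<Sum>i\<in>UNIV. \<Sum>c\<in>UNIV. \<Sum>a\<in>UNIV. \<Sum>d\<in>UNIV. smul (Y (a, i) * (C i c d * R a c)) (G c d))"
    by (rule sum.cong[OF refl], rule sum.cong[OF refl], rule sum.swap)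
  also have "\<dots> = (\<Sum>i\<in>UNIV. \<Sum>a\<in>UNIV. \<Sum>c\<in>UNIV. \<Sum>d\<in>UNIV. smul (Y (a, i) * (C i c d * R a c)) (G c d))"
    by (rule sum.cong[OF refl], rule sum.swap)
  also have "\<dots> = (\<Sum>a\<in>UNIV. \<Sum>i\<in>UNIV. \<Sum>c\<in>UNIV. \<Sum>d\<in>UNIV. smul (Y (a, i) * (C i c d * R a c)) (G c d))"
    by (rule sum.swap)
  also have "\<dots> = sweedler Y (\<lambda>a i. sweedler (\<Delta> (e i)) (\<lambda>c d. smul (R a c) (G c d)))"
    by (simp add: sweedler_def comult_basis_vec smul_sum_right mult_ac)
  finally show ?thesis .
qed

lemma integral_map_reconstruct:
  "v = (\<Sum>j\<in>UNIV. sweedler (\<Delta> (e j)) (\<lambda>a b. smul (integral_map (mul v (ant (e a))) j) (e b)))"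
proof -
  define Q where "Q a c i = mul (mul v (ant (e a))) (ant (ant (e c))) i" for a c i
  have "(\<Sum>j\<in>UNIV. sweedler (\<Delta> (e j)) (\<lambda>a b. smul (integral_map (mul v (ant (e a))) j) (e b)))
      = (\<Sum>i\<in>UNIV. \<Sum>j\<in>UNIV. sweedler (\<Delta> (e j)) (\<lambda>a b.
          smul (sweedler (\<Delta> (e i)) (\<lambda>c d. smul (Q a c i) (e d)) j) (e b)))"
    by (subst sum.swap) (simp only: integral_map_def Q_def sum_fun_apply smul_sum_left sweedler_sum)
  also have "\<dots> = (\<Sum>i\<in>UNIV. sweedler (\<Delta> (e i)) (\<lambda>c j. sweedler (\<Delta> (e j)) (\<lambda>a b. smul (Q a c i) (e b))))"
    by (simp only: sum_sweedler_coord)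
  also have "\<dots> = (\<Sum>i\<in>UNIV. sweedler (\<Delta> (e i)) (\<lambda>k b. sweedler (\<Delta> (e k)) (\<lambda>c a. smul (Q a c i) (e b))))"
    by (rule sum.cong[OF refl], rule sweedler_coassoc[symmetric])
  also have "\<dots> = (\<Sum>i\<in>UNIV. sweedler (\<Delta> (e i)) (\<lambda>k b. smul (ep k) (smul (v i) (e b))))"
  proof (rule sum.cong[OF refl], rule sweedler_cong)
    fix i k b
    let ?f = "\<lambda>z. smul (mul v (ant z) i) (e b)"
    have f: "linear_vec ?f"
      by (intro linear_vec_intros)
    have "sweedler (\<Delta> (e k)) (\<lambda>c a. smul (Q a c i) (e b)) = sweedler (\<Delta> (e k)) (\<lambda>c a. ?f (mul (ant (e c)) (e a)))"
      by (simp only: Q_def ant_mul assoc)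
    then show "sweedler (\<Delta> (e k)) (\<lambda>c a. smul (Q a c i) (e b)) = smul (ep k) (smul (v i) (e b))"
      by (simp only: antipode_left_linear[OF f] counit_basis_vec ant_unit unit_right)
  qed
  also have "\<dots> = (\<Sum>i\<in>UNIV. smul (v i) (e i))"
    by (simp only: sweedler_counit_left sum_basis_vec_smul)
  finally show ?thesis
    by (simp only: basis_expansion[symmetric])
qed

lemma integral_map_rint:
  assumes y: "y \<in> rint M ep"
  shows "integral_map y = y"
proof -
  have "integral_map y = (\<Sum>i\<in>UNIV. sweedler (\<Delta> (e i)) (\<lambda>c d. smul (ep c) (smul (y i) (e d))))"
    unfolding integral_map_def rint_mul[OF y] counit_ant counit_basis_vec
    by (simp add: smul_apply mult.commute)
  also have "\<dots> = (\<Sum>i\<in>UNIV. smul (y i) (e i))"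
    by (simp only: sweedler_counit_left sum_basis_vec_smul)
  finally show ?thesis
    by (simp only: basis_expansion[symmetric])
qed

text \<open>In Sweedler notation \<^term>\<open>integral_frame x k\<close> is \<open>\<Sum> \<langle>e\<^sup>k, S(x\<^sub>(\<^sub>1\<^sub>))\<rangle> x\<^sub>(\<^sub>2\<^sub>)\<close>.\<close>

definition integral_frame :: "('i \<Rightarrow> 'k) \<Rightarrow> 'i \<Rightarrow> 'i \<Rightarrow> 'k" where
  "integral_frame x k = sweedler (\<Delta> x) (\<lambda>a b. smul (ant (e a) k) (e b))"

lemma integral_frame_mul:
  assumes x: "x \<in> rint M ep"
  shows "mul (integral_frame x k) w = sweedler (\<Delta> x) (\<lambda>a b. smul (mul w (ant (e a)) k) (e b))"
proof -
  define G where "G w1 p q = smul (mul (e w1) (ant p) k) q" for w1 p and q :: "'i \<Rightarrow> 'k"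
  have G: "bilinear_vec (G w1)" for w1
    unfolding G_def by (rule bilinear_vecI) (intro linear_vec_intros)+
  have "smul (ant (e a) k) (mul (e b) w)
      = sweedler (\<Delta> w) (\<lambda>w1 j. sweedler (\<Delta> (e j)) (\<lambda>w2 w3. G w1 (mul (e a) (e w2)) (mul (e b) (e w3))))"
    for a b
  proof -
    have "bilinear_vec (\<lambda>p q. smul (mul p (ant (e a)) k) (mul (e b) q))"
      by (rule bilinear_vecI) (intro linear_vec_intros)+
    from sweedler_antipode_right_contract[OF this, of w, symmetric] show ?thesis
      by (simp only: G_def ant_mul assoc unit_left)
  qed
  then have "mul (integral_frame x k) w = sweedler (\<Delta> x) (\<lambda>a b.
      sweedler (\<Delta> w) (\<lambda>w1 j. sweedler (\<Delta> (e j)) (\<lambda>w2 w3. G w1 (mul (e a) (e w2)) (mul (e b) (e w3)))))"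
    unfolding integral_frame_def
    by (simp only: sweedler_linear[OF linear_mul_left, symmetric] linear_vec_smul[OF linear_mul_left])
  also have "\<dots> = sweedler (\<Delta> w) (\<lambda>w1 j. sweedler (\<Delta> (mul x (e j))) (\<lambda>p q. G w1 (e p) (e q)))"
    by (simp only: sweedler_swap[of "\<Delta> x"] sweedler_comult_mul[OF G, symmetric])
  also have "\<dots> = (\<Sum>w1\<in>UNIV. smul (w w1) (sweedler (\<Delta> x) (\<lambda>p q. G w1 (e p) (e q))))"
    by (simp only: rint_mul[OF x] counit_basis_vec linear_vec_smul[OF linear_vec_sweedler_comult]
        sweedler_counit_right)
  also have "\<dots> = sweedler (\<Delta> x) (\<lambda>a b. smul (mul w (ant (e a)) k) (e b))"
    unfolding G_def by (rule linear_vec_collapse) (intro linear_vec_intros)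
  finally show ?thesis .
qed

lemma integral_map_integral_frame:
  assumes x: "x \<in> rint M ep"
  shows "integral_map (mul (integral_frame x k) v) = smul (v k) x"
proof -
  define R where "R a c = mul (mul v (ant (ant (e c)))) (ant (e a)) k" for a c
  have "mul (mul (integral_frame x k) v) (ant (ant (e c))) = sweedler (\<Delta> x) (\<lambda>a b. smul (R a c) (e b))" for c
    unfolding R_def assoc by (simp only: integral_frame_mul[OF x] assoc)
  then have "integral_map (mul (integral_frame x k) v)
      = sweedler (\<Delta> x) (\<lambda>a i. sweedler (\<Delta> (e i)) (\<lambda>c d. smul (R a c) (e d)))"
    unfolding integral_map_def by (simp only: sum_sweedler_coord)
  also have "\<dots> = sweedler (\<Delta> x) (\<lambda>j d. sweedler (\<Delta> (e j)) (\<lambda>a c. smul (R a c) (e d)))"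
    by (rule sweedler_coassoc[symmetric])
  also have "\<dots> = sweedler (\<Delta> x) (\<lambda>j d. smul (ep j) (smul (v k) (e d)))"
  proof (rule sweedler_cong)
    fix j d
    let ?f = "\<lambda>z. smul (mul v (ant z) k) (e d)"
    have f: "linear_vec ?f"
      by (intro linear_vec_intros)
    have "sweedler (\<Delta> (e j)) (\<lambda>a c. smul (R a c) (e d)) = sweedler (\<Delta> (e j)) (\<lambda>a c. ?f (mul (e a) (ant (e c))))"
      by (simp only: R_def ant_mul assoc)
    then show "sweedler (\<Delta> (e j)) (\<lambda>a c. smul (R a c) (e d)) = smul (ep j) (smul (v k) (e d))"
      by (simp only: antipode_right_linear[OF f] counit_basis_vec ant_unit unit_right)
  qed
  also have "\<dots> = (\<Sum>d\<in>UNIV. smul (x d) (smul (v k) (e d)))"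
    by (rule sweedler_counit_left)
  also have "\<dots> = smul (v k) x"
    by (subst (2) basis_expansion[of x]) (simp add: smul_sum_right mult.commute)
  finally show ?thesis .
qed

lemma rint_nonzero: "\<exists>x\<in>rint M ep. x \<noteq> 0"
proof (rule ccontr)
  assume "\<not> (\<exists>x\<in>rint M ep. x \<noteq> 0)"
  then have "integral_map w = 0" for w
    using integral_map_in_rint by blast
  then have "u = 0"
    using integral_map_reconstruct[of u] by (simp add: sweedler_def)
  then show False
    using counit_unit counit_zero by simp
qed

lemma rint_multiple:
  assumes x: "x \<in> rint M ep" "x \<noteq> 0" and y: "y \<in> rint M ep"
  shows "\<exists>c. y = smul c x"
proof -
  define L where "L \<alpha> = (\<Sum>k\<in>UNIV. smul (\<alpha> k) (integral_frame x k))" for \<alpha>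
  have L: "integral_map (mul (L \<alpha>) v) = smul (\<Sum>k\<in>UNIV. \<alpha> k * v k) x" for \<alpha> v
    unfolding L_def
    by (simp only: linear_vec_comb[OF linear_mul_left] linear_vec_comb[OF linear_integral_map]
        integral_map_integral_frame[OF x(1)] smul_smul smul_sum_left)
  have "linear_vec L"
    by (simp add: linear_vec_def L_def smul_apply smul_add_left sum.distrib smul_sum_right)
  moreover have "inj L"
  proof (rule injI)
    fix \<alpha> \<beta> assume "L \<alpha> = L \<beta>"
    then have "smul (\<alpha> j) x = smul (\<beta> j) x" for j
      using L[of \<alpha> "e j"] L[of \<beta> "e j"] by (simp add: mult.commute[of _ "e j _"] sum_basis_vec_left)
    then show "\<alpha> = \<beta>"
      using smul_cancel_right[OF x(2)] by blast
  qed
  ultimately obtain \<alpha> where "L \<alpha> = y"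
    by (metis linear_vec_inj_imp_surj surjD)
  then have "y = smul (\<Sum>k\<in>UNIV. \<alpha> k * u k) x"
    using integral_map_rint[OF y] L[of \<alpha> u] by (simp add: unit_right)
  then show ?thesis ..
qed

lemma rint_two_sided:
  assumes t: "t \<in> rint M ep" "\<epsilon> t \<noteq> 0"
  shows "mul h t = smul (\<epsilon> h) t"
proof -
  have "t \<noteq> 0"
    using t(2) counit_zero by auto
  then obtain c where c: "mul h t = smul c t"
    using rint_multiple[OF t(1) _ rint_mul_left[OF t(1)]] by blast
  then have "\<epsilon> h * \<epsilon> t = c * \<epsilon> t"
    by (metis counit_mul counit_smul)
  then show ?thesis
    using c t(2) by simp
qed

section \<open>The conditions (Cond1) and (Cond2)\<close>

lemma HomIH_D:
  assumes "f \<in> HomIH M ep"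
  shows "\<And>x y. x \<in> rint M ep \<Longrightarrow> y \<in> rint M ep \<Longrightarrow> f (x + y) = f x + f y"
    and "\<And>c x. x \<in> rint M ep \<Longrightarrow> f (smul c x) = smul c (f x)"
    and "\<And>h x. x \<in> rint M ep \<Longrightarrow> f (mul h x) = mul h (f x)"
    and "\<And>x. x \<notin> rint M ep \<Longrightarrow> f x = 0"
  using assms unfolding HomIH_def mem_Collect_eq plus_fun_def smul_def zero_fun_def by blast+

lemma HomIH_I:
  assumes "\<And>x y. x \<in> rint M ep \<Longrightarrow> y \<in> rint M ep \<Longrightarrow> f (x + y) = f x + f y"
    and "\<And>c x. x \<in> rint M ep \<Longrightarrow> f (smul c x) = smul c (f x)"
    and "\<And>h x. x \<in> rint M ep \<Longrightarrow> f (mul h x) = mul h (f x)"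
    and "\<And>x. x \<notin> rint M ep \<Longrightarrow> f x = 0"
  shows "f \<in> HomIH M ep"
  using assms unfolding HomIH_def mem_Collect_eq plus_fun_def smul_def zero_fun_def by blast

lemma HomIk_D:
  assumes "g \<in> HomIk M ep"
  shows "\<And>x y. x \<in> rint M ep \<Longrightarrow> y \<in> rint M ep \<Longrightarrow> g (x + y) = g x + g y"
    and "\<And>c x. x \<in> rint M ep \<Longrightarrow> g (smul c x) = c * g x"
    and "\<And>h x. x \<in> rint M ep \<Longrightarrow> g (mul h x) = \<epsilon> h * g x"
    and "\<And>x. x \<notin> rint M ep \<Longrightarrow> g x = 0"
  using assms unfolding HomIk_def mem_Collect_eq plus_fun_def smul_def by blast+

lemma HomIk_I:
  assumes "\<And>x y. x \<in> rint M ep \<Longrightarrow> y \<in> rint M ep \<Longrightarrow> g (x + y) = g x + g y"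
    and "\<And>c x. x \<in> rint M ep \<Longrightarrow> g (smul c x) = c * g x"
    and "\<And>h x. x \<in> rint M ep \<Longrightarrow> g (mul h x) = \<epsilon> h * g x"
    and "\<And>x. x \<notin> rint M ep \<Longrightarrow> g x = 0"
  shows "g \<in> HomIk M ep"
  using assms unfolding HomIk_def mem_Collect_eq plus_fun_def smul_def by blast

lemma HomIH_determined:
  assumes t: "t \<in> rint M ep" "\<epsilon> t \<noteq> 0" and f: "f \<in> HomIH M ep" and x: "x \<in> rint M ep"
  shows "f x = smul (\<epsilon> (f t) / \<epsilon> t) x"
proof -
  have "smul (\<epsilon> t) (f x) = f (mul x t)"
    using HomIH_D(2)[OF f x] rint_mul[OF x, of t] by simp
  also have "\<dots> = smul (\<epsilon> (f t)) x"
    by (subst HomIH_D(3)[OF f t(1)]) (rule rint_mul[OF x])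
  finally have "\<epsilon> t * f x l = \<epsilon> (f t) * x l" for l
    by (metis smul_apply)
  then show ?thesis
    using t(2) by (simp add: fun_eq_iff smul_apply field_simps)
qed

lemma HomIk_determined:
  assumes t: "t \<in> rint M ep" "\<epsilon> t \<noteq> 0" and g: "g \<in> HomIk M ep" and x: "x \<in> rint M ep"
  shows "g x = \<epsilon> x * g t / \<epsilon> t"
proof -
  have "\<epsilon> t * g x = \<epsilon> x * g t"
    using HomIk_D(2)[OF g x, of "\<epsilon> t"] HomIk_D(3)[OF g t(1), of x] rint_mul[OF x, of t] by simp
  then show ?thesis
    using t(2) by (simp add: field_simps)
qed

lemma counit_comp_HomIk:
  assumes f: "f \<in> HomIH M ep"
  shows "(\<lambda>x. \<epsilon> (f x)) \<in> HomIk M ep"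
  by (rule HomIk_I)
    (simp_all add: HomIH_D(1-3)[OF f] HomIH_D(4)[OF f] counit_add counit_smul counit_mul counit_zero)

lemma scalar_HomIH: "(\<lambda>x. if x \<in> rint M ep then smul c x else 0) \<in> HomIH M ep"
  by (rule HomIH_I) (simp_all add: rint_add rint_smul rint_mul_left smul_add_right mult.commute
      linear_vec_smul[OF linear_mul_right])

lemma ITG_Cond1:
  assumes "ITG M ep"
  shows "Cond1 M ep"
proof -
  obtain t where t: "t \<in> rint M ep" "\<epsilon> t \<noteq> 0"
    using assms by (auto simp: ITG_def)
  have "inj_on (\<lambda>f x. \<epsilon> (f x)) (HomIH M ep)"
  proof (rule inj_onI)
    fix f1 f2 assume f1: "f1 \<in> HomIH M ep" and f2: "f2 \<in> HomIH M ep"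
      and eq: "(\<lambda>x. \<epsilon> (f1 x)) = (\<lambda>x. \<epsilon> (f2 x))"
    show "f1 = f2"
    proof
      fix x show "f1 x = f2 x"
        using HomIH_determined[OF t f1] HomIH_determined[OF t f2] HomIH_D(4)[OF f1] HomIH_D(4)[OF f2]
          fun_cong[OF eq, of t] by (cases "x \<in> rint M ep") simp_all
    qed
  qed
  moreover have "g \<in> (\<lambda>f x. \<epsilon> (f x)) ` HomIH M ep" if g: "g \<in> HomIk M ep" for g
  proof
    let ?f = "\<lambda>x. if x \<in> rint M ep then smul (g t / \<epsilon> t) x else 0"
    show "?f \<in> HomIH M ep"
      by (rule scalar_HomIH)
    show "g = (\<lambda>x. \<epsilon> (?f x))"
      using HomIk_determined[OF t g] HomIk_D(4)[OF g] by (auto simp: fun_eq_iff counit_smul counit_zero)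
  qed
  ultimately show ?thesis
    unfolding Cond1_def bij_betw_def using counit_comp_HomIk by blast
qed

lemma Cond1_ITG:
  assumes "Cond1 M ep"
  shows "ITG M ep"
proof (rule ccontr)
  assume "\<not> ITG M ep"
  then have \<epsilon>0: "\<epsilon> x = 0" if "x \<in> rint M ep" for x
    using that by (auto simp: ITG_def)
  obtain x0 where x0: "x0 \<in> rint M ep" "x0 \<noteq> 0"
    using rint_nonzero by blast
  let ?id = "\<lambda>x. if x \<in> rint M ep then smul 1 x else 0" and ?zero = "\<lambda>x. if x \<in> rint M ep then smul 0 x else 0"
  have "inj_on (\<lambda>f x. \<epsilon> (f x)) (HomIH M ep)"
    using assms by (simp add: Cond1_def bij_betw_def)
  moreover have "(\<lambda>x. \<epsilon> (?id x)) = (\<lambda>x. \<epsilon> (?zero x))"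
    by (simp add: fun_eq_iff \<epsilon>0 counit_zero)
  ultimately have "?id = ?zero"
    by (rule inj_onD[of "\<lambda>f x. \<epsilon> (f x)" "HomIH M ep" ?id ?zero]) (rule scalar_HomIH)+
  from fun_cong[OF this, of x0] x0 show False
    by simp
qed

end

lemma mcarrier_add: "v \<in> mcarrier d \<Longrightarrow> w \<in> mcarrier d \<Longrightarrow> (\<lambda>a. v a + w a) \<in> mcarrier d"
  by (simp add: mcarrier_def)

lemma mcarrier_smul: "v \<in> mcarrier d \<Longrightarrow> (\<lambda>a. c * v a) \<in> mcarrier d"
  by (simp add: mcarrier_def)

lemma mcarrier_mact: "mact \<rho> d h v \<in> mcarrier d"
  by (simp add: mcarrier_def mact_def)

lemma mcarrier_zero: "(\<lambda>_. 0) \<in> mcarrier d"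
  by (simp add: mcarrier_def)

definition is_submodule :: "('i::finite \<Rightarrow> nat \<Rightarrow> nat \<Rightarrow> 'k::field) \<Rightarrow> nat \<Rightarrow> (nat \<Rightarrow> 'k) set \<Rightarrow> bool" where
  "is_submodule \<rho> d W \<longleftrightarrow> W \<subseteq> mcarrier d \<and> (\<lambda>_. 0) \<in> W \<and>
     (\<forall>v\<in>W. \<forall>w\<in>W. (\<lambda>a. v a + w a) \<in> W) \<and> (\<forall>c. \<forall>v\<in>W. (\<lambda>a. c * v a) \<in> W) \<and>
     (\<forall>h. \<forall>v\<in>W. mact \<rho> d h v \<in> W)"

lemma simple_hmodule_submodule:
  "is_simple_hmodule M u \<rho> d \<Longrightarrow> is_submodule \<rho> d W \<Longrightarrow> W = {\<lambda>_. 0} \<or> W = mcarrier d"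
  by (simp add: is_simple_hmodule_def is_submodule_def)

definition hom_to_k :: "('i::finite \<Rightarrow> 'k::field) \<Rightarrow> ('i \<Rightarrow> nat \<Rightarrow> nat \<Rightarrow> 'k) \<Rightarrow> nat \<Rightarrow> ((nat \<Rightarrow> 'k) \<Rightarrow> 'k) \<Rightarrow> bool" where
  "hom_to_k ep \<rho> d g \<longleftrightarrow> (\<forall>v\<in>mcarrier d. \<forall>w\<in>mcarrier d. g (\<lambda>a. v a + w a) = g v + g w) \<and>
     (\<forall>c. \<forall>v\<in>mcarrier d. g (\<lambda>a. c * v a) = c * g v) \<and>
     (\<forall>h. \<forall>v\<in>mcarrier d. g (mact \<rho> d h v) = counit ep h * g v)"

lemma hom_to_k_zero_iff:
  "hom_to_k_zero ep \<rho> d \<longleftrightarrow> (\<forall>g. hom_to_k ep \<rho> d g \<longrightarrow> (\<forall>v\<in>mcarrier d. g v = 0))"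
  by (simp add: hom_to_k_zero_def hom_to_k_def)

lemma hom_to_kD:
  assumes "hom_to_k ep \<rho> d g" and "v \<in> mcarrier d"
  shows "w \<in> mcarrier d \<Longrightarrow> g (\<lambda>a. v a + w a) = g v + g w"
    and "g (\<lambda>a. c * v a) = c * g v"
    and "g (mact \<rho> d h v) = counit ep h * g v"
  using assms unfolding hom_to_k_def by blast+

lemma hom_to_k_kernel_submodule:
  assumes g: "hom_to_k ep \<rho> d g"
  shows "is_submodule \<rho> d {v \<in> mcarrier d. g v = 0}"
proof -
  have "g (\<lambda>_. 0) = 0"
    using hom_to_kD(2)[OF g mcarrier_zero, of 0] by simp
  then show ?thesis
    unfolding is_submodule_def
    by (auto simp: hom_to_kD[OF g] mcarrier_zero mcarrier_add mcarrier_smul mcarrier_mact)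
qed

lemma hom_to_k_inj_on:
  assumes simple: "is_simple_hmodule M u \<rho> d" and g: "hom_to_k ep \<rho> d g"
    and v0: "v0 \<in> mcarrier d" "g v0 \<noteq> 0"
  shows "inj_on g (mcarrier d)"
proof (rule inj_onI)
  fix v w assume v: "v \<in> mcarrier d" and w: "w \<in> mcarrier d" and eq: "g v = g w"
  let ?z = "\<lambda>a. v a + (- 1) * w a"
  have "{v \<in> mcarrier d. g v = 0} \<noteq> mcarrier d"
    using v0 by blast
  then have ker: "{v \<in> mcarrier d. g v = 0} = {\<lambda>_. 0}"
    using simple_hmodule_submodule[OF simple hom_to_k_kernel_submodule[OF g]] by blast
  have "g ?z = g v + (- 1) * g w"
    by (simp only: hom_to_kD(1)[OF g v mcarrier_smul[OF w]] hom_to_kD(2)[OF g w])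
  then have "?z \<in> {v \<in> mcarrier d. g v = 0}"
    using eq mcarrier_add[OF v mcarrier_smul[OF w, of "- 1"]] by simp
  then have "?z = (\<lambda>_. 0)"
    using ker by blast
  then show "v = w"
    by (simp add: fun_eq_iff)
qed

context hopf
begin

lemma iso_to_rint_from_hom:
  assumes t: "t \<in> rint M ep" "\<epsilon> t \<noteq> 0" and g: "hom_to_k ep \<rho> d g"
    and inj: "inj_on g (mcarrier d)" and v0: "v0 \<in> mcarrier d" "g v0 \<noteq> 0"
  shows "iso_to_rint M ep \<rho> d"
  unfolding iso_to_rint_def
proof (intro exI conjI ballI allI)
  let ?\<phi> = "\<lambda>v. smul (g v) t"
  have "t \<noteq> 0"
    using t(2) counit_zero by auto
  then have "inj_on ?\<phi> (mcarrier d)"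
    using inj by (auto simp: inj_on_def dest: smul_cancel_right)
  moreover have "y \<in> ?\<phi> ` mcarrier d" if y: "y \<in> rint M ep" for y
  proof -
    obtain c where "y = smul c t"
      using rint_multiple[OF t(1) \<open>t \<noteq> 0\<close> y] by blast
    moreover have "g (\<lambda>a. (c / g v0) * v0 a) = c / g v0 * g v0"
      by (rule hom_to_kD(2)[OF g v0(1)])
    then have "g (\<lambda>a. (c / g v0) * v0 a) = c"
      using v0(2) by simp
    ultimately show ?thesis
      using mcarrier_smul[OF v0(1)] by (metis image_eqI)
  qed
  ultimately show "bij_betw ?\<phi> (mcarrier d) (rint M ep)"
    unfolding bij_betw_def using rint_smul[OF t(1)] by blast
  fix v w :: "nat \<Rightarrow> 'k" and c h assume v: "v \<in> mcarrier d"
  show "?\<phi> (\<lambda>a. c * v a) = (\<lambda>l. c * ?\<phi> v l)"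
    by (simp add: hom_to_kD(2)[OF g v] smul_def mult.assoc)
  show "?\<phi> (mact \<rho> d h v) = mul h (?\<phi> v)"
    by (simp add: hom_to_kD(3)[OF g v] linear_vec_smul[OF linear_mul_right] rint_two_sided[OF t] mult.commute)
  assume w: "w \<in> mcarrier d"
  show "?\<phi> (\<lambda>a. v a + w a) = (\<lambda>l. ?\<phi> v l + ?\<phi> w l)"
    by (simp add: hom_to_kD(1)[OF g v w] smul_def algebra_simps)
qed

lemma ITG_Cond2:
  assumes "ITG M ep"
  shows "Cond2 M u ep"
  unfolding Cond2_def hom_to_k_zero_iff
proof (intro allI impI ballI)
  fix d \<rho> g and v :: "nat \<Rightarrow> 'k"
  assume \<rho>: "is_simple_hmodule M u \<rho> d \<and> \<not> iso_to_rint M ep \<rho> d"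
    and g: "hom_to_k ep \<rho> d g" and v: "v \<in> mcarrier d"
  obtain t where t: "t \<in> rint M ep" "\<epsilon> t \<noteq> 0"
    using assms by (auto simp: ITG_def)
  show "g v = 0"
    using \<rho> iso_to_rint_from_hom[OF t g hom_to_k_inj_on[OF _ g v] v] by blast
qed

end

theorem lemma3p5:
  fixes M :: "'i::finite \<Rightarrow> 'i \<Rightarrow> 'i \<Rightarrow> 'k::field"
    and u :: "'i \<Rightarrow> 'k" and C :: "'i \<Rightarrow> 'i \<Rightarrow> 'i \<Rightarrow> 'k"
    and ep :: "'i \<Rightarrow> 'k" and S :: "'i \<Rightarrow> 'i \<Rightarrow> 'k"
  assumes "hopf_algebra M u C ep S"
  shows "(ITG M ep \<longleftrightarrow> Cond1 M ep) \<and> (ITG M ep \<longleftrightarrow> Cond1 M ep \<and> Cond2 M u ep)"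
proof -
  interpret hopf M u C ep S
    by (rule hopf.intro) fact
  show ?thesis
    using ITG_Cond1 Cond1_ITG ITG_Cond2 by blast
qed

end
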